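(* Let $\widehat{\Gamma}$ be a Harnack graph with controlled, uniformly lazy weights $(\pi,\mu)$, $K$ a set of vertices, $\Gamma:=\widehat\Gamma\setminus K$, and $V_{\partial\Gamma}(x,r)=\pi(B_{\widehat\Gamma}(x,r)\cap\partial\Gamma)$. Assume in addition that $V_{\partial\Gamma}$ is doubling: there is $D>0$ with $V_{\partial\Gamma}(z,2r)\le D\,V_{\partial\Gamma}(z,r)$ for all $z\in\partial\Gamma$, $r>0$. For $x\in\Gamma$ let $v_x\in\partial\Gamma$ be a point achieving $d(x,K)$, set $d_x:=d(x,K)$ and $\widetilde W(x,r):=V_{\widehat\Gamma}(x,r)/V_{\partial\Gamma}(v_x,r)$. Then there is a constant $C$ such that \[\psi_K(x)\le\sum_{n\ge d_x^2}\frac{C}{\widetilde W(x,\sqrt n)}\qquad\text{for all }x\in\Gamma\setminus\partial_I\Gamma.\]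
   Context: $\widehat{\Gamma}=(\widehat V,\widehat E)$ is an infinite simple connected graph with symmetric edge weights $\mu_{xy}=\mu_{yx}$, $\mu_{xy}\ne0$ iff $x\sim y$, vertex weights $\pi>0$ with $\sum_{y\sim x}\mu_{xy}\le\pi(x)$; Markov kernel $\mathcal{K}(x,y)=\mu_{xy}/\pi(x)$ ($x\neq y$), $\mathcal{K}(x,x)=1-\sum_{z\sim x}\mu_{xz}/\pi(x)$. Controlled weights: $\exists C_c>1$ with $\mu_{xy}/\pi(x)\ge1/C_c$ for all $y\sim x$. Uniformly lazy: $\exists C_e\in(0,1)$ with $\mathcal{K}(x,x)\ge C_e$. $d$ is graph distance, $B_{\widehat\Gamma}(x,r)=\{y:d(x,y)\le r\}$, $V_{\widehat\Gamma}(x,r)=\pi(B_{\widehat\Gamma}(x,r))$. Heat kernel $p(n,x,y)=\mathcal{K}^n(x,y)/\pi(y)$; Harnack graph means two-sided Gaussian bounds $\frac{c_1}{V(x,\sqrt n)}e^{-d(x,y)^2/(c_2n)}\le p(n,x,y)\le\frac{c_3}{V(x,\sqrt n)}e^{-d(x,y)^2/(c_4 n)}$ for all $x,y$, $n\ge d(x,y)$. $\Gamma$ is the induced subgraph on $\widehat V\setminus K$; $\partial\Gamma$ = vertices outside $\Gamma$ adjacent to $\Gamma$; $\partial_I\Gamma$ = vertices of $\Gamma$ adjacent to a vertex outside $\Gamma$. $\psi_K(x)=\mathbb{P}^x(\tau_K<\infty)$, $\tau_K=\min\{n\ge0:X_n\in K\}$. *)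

theory Defs
  imports "HOL-Analysis.Analysis" "HOL-Library.Extended_Nonnegative_Real"
begin

text \<open>Weighted graphs: the vertex set is the whole type 'v, adjacency is a
  predicate E (symmetric, irreflexive), edge weights mu, vertex weights pi.\<close>

definition nbrs :: "('v \<Rightarrow> 'v \<Rightarrow> bool) \<Rightarrow> 'v \<Rightarrow> 'v set" where
  "nbrs E x = {y. E x y}"

definition gdist :: "('v \<Rightarrow> 'v \<Rightarrow> bool) \<Rightarrow> 'v \<Rightarrow> 'v \<Rightarrow> nat" where
  "gdist E x y = (LEAST n. (E ^^ n) x y)"

definition gball :: "('v \<Rightarrow> 'v \<Rightarrow> bool) \<Rightarrow> 'v \<Rightarrow> real \<Rightarrow> 'v set" where
  "gball E x r = {y. real (gdist E x y) \<le> r}"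

definition gvol :: "('v \<Rightarrow> 'v \<Rightarrow> bool) \<Rightarrow> ('v \<Rightarrow> real) \<Rightarrow> 'v \<Rightarrow> real \<Rightarrow> real" where
  "gvol E \<pi> x r = sum \<pi> (gball E x r)"

text \<open>Outer boundary of Gamma = V minus K: vertices of K adjacent to a vertex outside K.\<close>
definition outer_bdry :: "('v \<Rightarrow> 'v \<Rightarrow> bool) \<Rightarrow> 'v set \<Rightarrow> 'v set" where
  "outer_bdry E K = {y \<in> K. \<exists>x. x \<notin> K \<and> E x y}"

text \<open>Inner boundary: vertices of Gamma adjacent to a vertex of K.\<close>
definition inner_bdry :: "('v \<Rightarrow> 'v \<Rightarrow> bool) \<Rightarrow> 'v set \<Rightarrow> 'v set" where
  "inner_bdry E K = {x. x \<notin> K \<and> (\<exists>y\<in>K. E x y)}"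

definition bdry_vol :: "('v \<Rightarrow> 'v \<Rightarrow> bool) \<Rightarrow> ('v \<Rightarrow> real) \<Rightarrow> 'v set \<Rightarrow> 'v \<Rightarrow> real \<Rightarrow> real" where
  "bdry_vol E \<pi> K x r = sum \<pi> (gball E x r \<inter> outer_bdry E K)"

definition dist_to_set :: "('v \<Rightarrow> 'v \<Rightarrow> bool) \<Rightarrow> 'v \<Rightarrow> 'v set \<Rightarrow> nat" where
  "dist_to_set E x K = Inf (gdist E x ` K)"

definition mkernel :: "('v \<Rightarrow> 'v \<Rightarrow> bool) \<Rightarrow> ('v \<Rightarrow> 'v \<Rightarrow> real) \<Rightarrow> ('v \<Rightarrow> real) \<Rightarrow> 'v \<Rightarrow> 'v \<Rightarrow> real" where
  "mkernel E \<mu> \<pi> x y =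
     (if x = y then 1 - (\<Sum>z\<in>nbrs E x. \<mu> x z / \<pi> x) else \<mu> x y / \<pi> x)"

fun kpow :: "('v \<Rightarrow> 'v \<Rightarrow> bool) \<Rightarrow> ('v \<Rightarrow> 'v \<Rightarrow> real) \<Rightarrow> ('v \<Rightarrow> real) \<Rightarrow> nat \<Rightarrow> 'v \<Rightarrow> 'v \<Rightarrow> real" where
  "kpow E \<mu> \<pi> 0 x y = (if x = y then 1 else 0)"
| "kpow E \<mu> \<pi> (Suc n) x y =
     (\<Sum>z\<in>insert x (nbrs E x). mkernel E \<mu> \<pi> x z * kpow E \<mu> \<pi> n z y)"

definition heat_kernel :: "('v \<Rightarrow> 'v \<Rightarrow> bool) \<Rightarrow> ('v \<Rightarrow> 'v \<Rightarrow> real) \<Rightarrow> ('v \<Rightarrow> real) \<Rightarrow> nat \<Rightarrow> 'v \<Rightarrow> 'v \<Rightarrow> real" where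
  "heat_kernel E \<mu> \<pi> n x y = kpow E \<mu> \<pi> n x y / \<pi> y"

text \<open>Harnack graph: two-sided Gaussian heat kernel bounds for n \<ge> d(x,y).\<close>
definition harnack_graph :: "('v \<Rightarrow> 'v \<Rightarrow> bool) \<Rightarrow> ('v \<Rightarrow> 'v \<Rightarrow> real) \<Rightarrow> ('v \<Rightarrow> real) \<Rightarrow> bool" where
  "harnack_graph E \<mu> \<pi> \<longleftrightarrow> (\<exists>c1 c2 c3 c4. c1 > 0 \<and> c2 > 0 \<and> c3 > 0 \<and> c4 > 0 \<and>
     (\<forall>x y n. gdist E x y \<le> n \<longrightarrow>
        c1 / gvol E \<pi> x (sqrt (real n)) * exp (- (real (gdist E x y))\<^sup>2 / (c2 * real n))
          \<le> heat_kernel E \<mu> \<pi> n x y \<and>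
        heat_kernel E \<mu> \<pi> n x y
          \<le> c3 / gvol E \<pi> x (sqrt (real n)) * exp (- (real (gdist E x y))\<^sup>2 / (c4 * real n))))"

text \<open>P^x(tau_K \<le> n), where tau_K = min{n \<ge> 0. X_n \<in> K}, for the chain with kernel mkernel.\<close>
fun hit_le :: "('v \<Rightarrow> 'v \<Rightarrow> bool) \<Rightarrow> ('v \<Rightarrow> 'v \<Rightarrow> real) \<Rightarrow> ('v \<Rightarrow> real) \<Rightarrow> 'v set \<Rightarrow> nat \<Rightarrow> 'v \<Rightarrow> real" where
  "hit_le E \<mu> \<pi> K 0 x = (if x \<in> K then 1 else 0)"
| "hit_le E \<mu> \<pi> K (Suc n) x =
     (if x \<in> K then 1 else (\<Sum>z\<in>insert x (nbrs E x). mkernel E \<mu> \<pi> x z * hit_le E \<mu> \<pi> K n z))"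

text \<open>psi_K(x) = P^x(tau_K < infinity) = sup_n P^x(tau_K \<le> n).\<close>
definition hit_prob :: "('v \<Rightarrow> 'v \<Rightarrow> bool) \<Rightarrow> ('v \<Rightarrow> 'v \<Rightarrow> real) \<Rightarrow> ('v \<Rightarrow> real) \<Rightarrow> 'v set \<Rightarrow> 'v \<Rightarrow> real" where
  "hit_prob E \<mu> \<pi> K x = (SUP n. hit_le E \<mu> \<pi> K n x)"

end

theory Submission
  imports Defs
begin

text \<open>A walk started in \<open>\<Gamma>\<close> can enter \<open>K\<close> only through the outer boundary, so
  \<open>\<psi>\<^sub>K(x)\<close> is at most the expected number of visits to \<open>\<partial>\<Gamma>\<close>, i.e. the sum over \<open>m\<close> of
  \<open>P\<^sup>x(X\<^sub>m \<in> \<partial>\<Gamma>)\<close>. By the Gaussian upper bound this probability is at most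
  \<open>V(x,\<surd>m)\<^sup>-\<^sup>1\<close> times a Gaussian-weighted boundary mass; cutting \<open>\<partial>\<Gamma>\<close> into dyadic shells
  around \<open>x\<close> and using the doubling of \<open>V\<^sub>\<partial>\<^sub>\<Gamma>\<close> at the nearest boundary point \<open>v\<close> bounds
  that mass by \<open>C exp(-\<rho>\<^sup>2/(8 c m)) V\<^sub>\<partial>\<^sub>\<Gamma>(v,\<rho>)\<close> with \<open>\<rho> = max(d\<^sub>x, \<surd>m)\<close>.
  For \<open>m \<ge> d\<^sub>x\<^sup>2\<close> this is the \<open>m\<close>-th term of the series. For \<open>m < d\<^sub>x\<^sup>2\<close>, the two-sided
  bounds force volume doubling, the resulting polynomial growth of \<open>V\<close> is absorbed by the
  Gaussian factor, and each of these \<open>d\<^sub>x\<^sup>2\<close> terms is at most \<open>C V\<^sub>\<partial>\<^sub>\<Gamma>(v,d\<^sub>x)/V(x,2d\<^sub>x)\<close>,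
  which is dominated by each term of the series with index in \<open>[d\<^sub>x\<^sup>2, 2d\<^sub>x\<^sup>2)\<close>.\<close>

lemma power_mult_exp_neg_le:
  fixes s a :: real
  assumes "s \<ge> 0" "a > 0"
  shows "s ^ N * exp (- s / a) \<le> (a * real N) ^ N"
proof (cases "N = 0")
  case True
  then show ?thesis
    using assms by simp
next
  case False
  have "(s / (a * N)) ^ N \<le> exp (s / (a * N)) ^ N"
    using assms by (intro power_mono order_trans[OF _ exp_ge_add_one_self]) auto
  also have "\<dots> = exp (s / a)"
    using False by (simp flip: exp_of_nat_mult)
  finally have "s ^ N \<le> (a * N) ^ N * exp (s / a)"
    using False assms(2) by (simp add: power_divide divide_le_eq mult.commute)
  then show ?thesis
    by (simp add: exp_minus field_simps)
qed

lemma exists_dyadic_scale: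
  fixes g \<rho> a :: real
  assumes "\<rho> > 0" "g \<le> 2 ^ m * \<rho>" "\<rho>\<^sup>2 \<le> g\<^sup>2 + a" "a \<ge> 0"
  shows "\<exists>i\<le>m. g \<le> 2 ^ i * \<rho> \<and> 4 ^ i * \<rho>\<^sup>2 \<le> 4 * g\<^sup>2 + a"
proof -
  define i where "i = (LEAST i. g \<le> 2 ^ i * \<rho>)"
  have "g \<le> 2 ^ i * \<rho>" "i \<le> m"
    unfolding i_def using assms(2) by (auto intro: LeastI Least_le)
  moreover have "4 ^ i * \<rho>\<^sup>2 \<le> 4 * g\<^sup>2 + a"
  proof (cases "i = 0")
    case True
    have "\<rho>\<^sup>2 \<le> g\<^sup>2 + a"
      by (rule assms(3))
    also have "\<dots> \<le> 4 * g\<^sup>2 + a"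
      by simp
    finally show ?thesis
      using True by simp
  next
    case False
    then obtain k where k: "i = Suc k"
      using not0_implies_Suc by blast
    then have "\<not> g \<le> 2 ^ k * \<rho>"
      unfolding i_def by (intro not_less_Least) (simp add: i_def)
    then have "(2 ^ k * \<rho>)\<^sup>2 \<le> g\<^sup>2"
      using assms(1) by (intro power_mono) auto
    moreover have "(4::real) ^ k = (2 ^ k)\<^sup>2"
      by (induction k) (simp_all add: power_mult_distrib)
    then have "(4::real) ^ i * \<rho>\<^sup>2 = 4 * (2 ^ k * \<rho>)\<^sup>2"
      by (simp add: k power_mult_distrib)
    ultimately show ?thesis
      using assms(4) by linarith
  qed
  ultimately show ?thesis
    by blast
qed

lemma dyadic_term_le:
  fixes c t D :: real
  assumes "c > 0" "t \<ge> 1" "D > 0" "2 * D \<le> 4 ^ N"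
  shows "D ^ i * exp (- (4 ^ i * t / c)) \<le> (2 * c * real N) ^ N * (1 / 2) ^ i * exp (- t / (2 * c))"
proof -
  have "4 ^ i * 1 \<le> 4 ^ i * t" "1 * t \<le> 4 ^ i * t"
    using assms(2) by (intro mult_left_mono mult_right_mono; simp)+
  then have "4 ^ i + t \<le> 2 * (4 ^ i * t)"
    by linarith
  then have "(4 ^ i + t) / (2 * c) \<le> 2 * (4 ^ i * t) / (2 * c)"
    using assms(1) by (intro divide_right_mono) auto
  then have "exp (- (4 ^ i * t / c)) \<le> exp (- (4 ^ i) / (2 * c)) * exp (- t / (2 * c))"
    by (simp add: add_divide_distrib flip: exp_add)
  also have "exp (- (4 ^ i) / (2 * c)) \<le> (2 * c * real N) ^ N / (4 ^ N) ^ i"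
    using power_mult_exp_neg_le[of "4 ^ i" "2 * c" N] assms(1)
    by (simp add: le_divide_eq mult.commute flip: power_mult)
  finally have "D ^ i * exp (- (4 ^ i * t / c))
      \<le> D ^ i * ((2 * c * real N) ^ N / (4 ^ N) ^ i * exp (- t / (2 * c)))"
    using assms(3) by (intro mult_left_mono) auto
  also have "\<dots> = (2 * c * real N) ^ N * (D / 4 ^ N) ^ i * exp (- t / (2 * c))"
    by (simp add: power_divide)
  also have "\<dots> \<le> (2 * c * real N) ^ N * (1 / 2) ^ i * exp (- t / (2 * c))"
    using assms by (intro mult_right_mono mult_left_mono power_mono) (auto simp: divide_le_eq)
  finally show ?thesis .
qed

lemma dyadic_series_le:
  fixes c t D :: real
  assumes "c > 0" "t \<ge> 1" "D > 0" "2 * D \<le> 4 ^ N"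
  shows "(\<Sum>i\<le>m. D ^ Suc i * exp (- (4 ^ i * t / c)))
    \<le> 2 * D * (2 * c * real N) ^ N * exp (- t / (2 * c))"
proof -
  let ?M = "D * (2 * c * real N) ^ N * exp (- t / (2 * c))"
  have "(\<Sum>i\<le>m. D ^ Suc i * exp (- (4 ^ i * t / c))) \<le> (\<Sum>i\<le>m. ?M * (1 / 2) ^ i)"
    using dyadic_term_le[OF assms] assms(3) by (intro sum_mono) (simp add: mult_left_mono mult_ac)
  also have "\<dots> = ?M * (\<Sum>i\<le>m. (1 / 2) ^ i)"
    by (simp add: sum_distrib_left)
  also have "\<dots> \<le> ?M * 2"
  proof (rule mult_left_mono)
    have "(\<Sum>i\<le>m. (1 / 2 :: real) ^ i) \<le> (\<Sum>i. (1 / 2) ^ i)"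
      by (intro sum_le_suminf summable_geometric) auto
    then show "(\<Sum>i\<le>m. (1 / 2 :: real) ^ i) \<le> 2"
      using suminf_geometric[of "1 / 2 :: real"] by simp
  qed (use assms in simp)
  finally show ?thesis
    by (simp add: mult_ac)
qed

lemma ennreal_SUP_le:
  fixes f :: "nat \<Rightarrow> real"
  assumes "\<And>n. ennreal (f n) \<le> s"
  shows "ennreal (SUP n. f n) \<le> s"
proof (cases s)
  case (real r)
  then have "f n \<le> r" for n
    using assms[of n] by (auto simp: ennreal_le_iff2)
  then have "(SUP n. f n) \<le> r"
    by (intro cSUP_least) auto
  then show ?thesis
    using real by (simp add: ennreal_leI)
qed simp

section \<open>Graph distance and the random walk\<close>

text \<open>\<open>markov_iter E \<mu> \<pi> f n x\<close> is the expectation of \<open>f (X\<^sub>n)\<close> for the walk started at \<open>x\<close>;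
  for \<open>f = indicator A\<close> it is \<open>P\<^sup>x(X\<^sub>n \<in> A)\<close>.\<close>
fun markov_iter ::
  "('v \<Rightarrow> 'v \<Rightarrow> bool) \<Rightarrow> ('v \<Rightarrow> 'v \<Rightarrow> real) \<Rightarrow> ('v \<Rightarrow> real) \<Rightarrow> ('v \<Rightarrow> real) \<Rightarrow> nat \<Rightarrow> 'v \<Rightarrow> real"
where
  "markov_iter E \<mu> \<pi> f 0 x = f x"
| "markov_iter E \<mu> \<pi> f (Suc n) x =
     (\<Sum>z\<in>insert x (nbrs E x). mkernel E \<mu> \<pi> x z * markov_iter E \<mu> \<pi> f n z)"

locale locally_finite_graph =
  fixes E :: "'v \<Rightarrow> 'v \<Rightarrow> bool"
  assumes sym: "\<And>x y. E x y \<longleftrightarrow> E y x"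
    and connected: "\<And>x y. \<exists>n. (E ^^ n) x y"
    and loc_finite: "\<And>x. finite (nbrs E x)"
begin

lemma relpowp_gdist: "(E ^^ gdist E x y) x y"
  unfolding gdist_def using connected by (rule LeastI_ex)

lemma gdist_le: "(E ^^ n) x y \<Longrightarrow> gdist E x y \<le> n"
  unfolding gdist_def by (rule Least_le)

lemma gdist_eq_0_iff: "gdist E x y = 0 \<longleftrightarrow> x = y"
  using relpowp_gdist[of x y] gdist_le[of 0 x y] by (auto elim: relpowp_0_E)

lemma gdist_self [simp]: "gdist E x x = 0"
  by (simp add: gdist_eq_0_iff)

lemma gdist_triangle: "gdist E x z \<le> gdist E x y + gdist E y z"
  using relpowp_trans[OF relpowp_gdist relpowp_gdist] by (rule gdist_le)

lemma relpowp_sym: "(E ^^ n) x y \<Longrightarrow> (E ^^ n) y x"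
proof (induction n arbitrary: y)
  case 0
  then show ?case by (auto elim: relpowp_0_E)
next
  case (Suc n)
  then obtain w where "(E ^^ n) x w" "E w y"
    by (auto elim: relpowp_Suc_E)
  then show ?case
    using Suc.IH sym by (meson relpowp_Suc_I2)
qed

lemma gdist_commute: "gdist E x y = gdist E y x"
  using gdist_le[OF relpowp_sym[OF relpowp_gdist[of x y]]]
    gdist_le[OF relpowp_sym[OF relpowp_gdist[of y x]]]
  by simp

lemma gdist_nbr: "z \<in> insert x (nbrs E x) \<Longrightarrow> gdist E x z \<le> 1"
  using gdist_le[OF relpowp_Suc_I[OF relpowp_0_I, of E x z]] by (auto simp: nbrs_def)

lemma mem_gball [simp]: "y \<in> gball E x r \<longleftrightarrow> real (gdist E x y) \<le> r"
  by (simp add: gball_def)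

lemma gball_mono: "r \<le> R \<Longrightarrow> gball E x r \<subseteq> gball E x R"
  by auto

lemma gball_nbr_subset:
  assumes "z \<in> insert x (nbrs E x)"
  shows "gball E z (real n) \<subseteq> gball E x (real (Suc n))"
proof
  fix w assume "w \<in> gball E z (real n)"
  then show "w \<in> gball E x (real (Suc n))"
    using assms gdist_nbr[of z x] gdist_triangle[of x w z] by simp
qed

lemma finite_relpowp: "finite {y. (E ^^ n) x y}"
proof (induction n)
  case 0
  then show ?case by (simp add: relpowp_0_E)
next
  case (Suc n)
  have "{y. (E ^^ Suc n) x y} \<subseteq> (\<Union>w\<in>{y. (E ^^ n) x y}. nbrs E w)"
    by (auto simp: nbrs_def elim: relpowp_Suc_E)
  moreover have "finite (\<Union>w\<in>{y. (E ^^ n) x y}. nbrs E w)"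
    using Suc loc_finite by blast
  ultimately show ?case by (rule finite_subset)
qed

lemma finite_gball: "finite (gball E x r)"
proof (rule finite_subset)
  show "gball E x r \<subseteq> (\<Union>n\<le>nat \<lfloor>r\<rfloor>. {y. (E ^^ n) x y})"
    using relpowp_gdist by (fastforce simp: le_nat_floor)
qed (auto intro: finite_relpowp)

end

locale reversible_walk = locally_finite_graph E for E :: "'v \<Rightarrow> 'v \<Rightarrow> bool" +
  fixes \<mu> :: "'v \<Rightarrow> 'v \<Rightarrow> real" and \<pi> :: "'v \<Rightarrow> real"
  assumes mu_sym: "\<And>x y. \<mu> x y = \<mu> y x"
    and mu_edge: "\<And>x y. \<mu> x y \<noteq> 0 \<longleftrightarrow> E x y"
    and mu_nonneg: "\<And>x y. \<mu> x y \<ge> 0"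
    and pi_pos: "\<And>x. \<pi> x > 0"
    and pi_ge: "\<And>x. (\<Sum>y\<in>nbrs E x. \<mu> x y) \<le> \<pi> x"
begin

lemma mkernel_nonneg: "mkernel E \<mu> \<pi> x y \<ge> 0"
proof (cases "x = y")
  case True
  have "(\<Sum>z\<in>nbrs E x. \<mu> x z / \<pi> x) = (\<Sum>z\<in>nbrs E x. \<mu> x z) / \<pi> x"
    by (simp add: sum_divide_distrib)
  also have "\<dots> \<le> 1"
    using pi_ge[of x] pi_pos[of x] by simp
  finally show ?thesis
    using True by (simp add: mkernel_def)
next
  case False
  then show ?thesis
    using mu_nonneg[of x y] pi_pos[of x] by (simp add: mkernel_def)
qed

lemma mkernel_eq_0: "y \<notin> insert x (nbrs E x) \<Longrightarrow> mkernel E \<mu> \<pi> x y = 0"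
  using mu_edge[of x y] by (auto simp: mkernel_def nbrs_def)

lemma mkernel_reversible: "\<pi> x * mkernel E \<mu> \<pi> x y = \<pi> y * mkernel E \<mu> \<pi> y x"
  using pi_pos[of x] pi_pos[of y] mu_sym[of x y] by (auto simp: mkernel_def)

lemma markov_iter_nonneg: "(\<And>y. f y \<ge> 0) \<Longrightarrow> markov_iter E \<mu> \<pi> f n x \<ge> 0"
  by (induction n arbitrary: x) (auto intro!: sum_nonneg mult_nonneg_nonneg mkernel_nonneg)

lemma kpow_add: "kpow E \<mu> \<pi> (a + b) x y = markov_iter E \<mu> \<pi> (\<lambda>w. kpow E \<mu> \<pi> b w y) a x"
  by (induction a arbitrary: x) simp_all

lemma markov_iter_eq_sum:
  assumes "finite F" and "gball E x (real n) \<subseteq> F"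
  shows "markov_iter E \<mu> \<pi> f n x = (\<Sum>w\<in>F. kpow E \<mu> \<pi> n x w * f w)"
  using assms(2)
proof (induction n arbitrary: x)
  case 0
  have "(\<Sum>w\<in>F. kpow E \<mu> \<pi> 0 x w * f w) = (\<Sum>w\<in>F. if x = w then f w else 0)"
    by (rule sum.cong) auto
  also have "\<dots> = f x"
    using 0 \<open>finite F\<close> by (auto simp: subset_iff)
  finally show ?case by simp
next
  case (Suc n)
  have "markov_iter E \<mu> \<pi> f n z = (\<Sum>w\<in>F. kpow E \<mu> \<pi> n z w * f w)"
    if "z \<in> insert x (nbrs E x)" for z
    using Suc.IH gball_nbr_subset[OF that] Suc.prems by blast
  then have "markov_iter E \<mu> \<pi> f (Suc n) x
      = (\<Sum>z\<in>insert x (nbrs E x). mkernel E \<mu> \<pi> x z * (\<Sum>w\<in>F. kpow E \<mu> \<pi> n z w * f w))"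
    by (simp del: insert_iff)
  also have "\<dots> = (\<Sum>w\<in>F. kpow E \<mu> \<pi> (Suc n) x w * f w)"
    by (simp add: sum_distrib_left sum_distrib_right sum.swap[of _ "insert x (nbrs E x)"] mult.assoc)
  finally show ?case .
qed

lemma chapman_kolmogorov:
  assumes "finite F" and "gball E x (real a) \<subseteq> F"
  shows "kpow E \<mu> \<pi> (a + b) x y = (\<Sum>w\<in>F. kpow E \<mu> \<pi> a x w * kpow E \<mu> \<pi> b w y)"
  unfolding kpow_add using assms by (rule markov_iter_eq_sum)

lemma kpow_one: "kpow E \<mu> \<pi> 1 x y = mkernel E \<mu> \<pi> x y"
  using loc_finite[of x] mkernel_eq_0[of y x]
  by (auto simp: if_distrib sum.delta cong: if_cong)

lemma kpow_reversible: "\<pi> x * kpow E \<mu> \<pi> n x y = \<pi> y * kpow E \<mu> \<pi> n y x"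
proof (induction n arbitrary: x)
  case 0
  then show ?case by simp
next
  case (Suc n)
  define F where "F = gball E y (real n) \<union> insert x (nbrs E x)"
  have F: "finite F" "gball E y (real n) \<subseteq> F"
    using finite_gball loc_finite by (auto simp: F_def)
  have "\<pi> x * kpow E \<mu> \<pi> (Suc n) x y
      = (\<Sum>z\<in>insert x (nbrs E x). mkernel E \<mu> \<pi> z x * (\<pi> z * kpow E \<mu> \<pi> n z y))"
    by (auto simp: sum_distrib_left mkernel_reversible mult.assoc[symmetric] intro!: sum.cong)
  also have "\<dots> = (\<Sum>z\<in>F. \<pi> y * (kpow E \<mu> \<pi> n y z * mkernel E \<mu> \<pi> z x))"
  proof (rule sum.mono_neutral_cong_left)
    show "\<forall>z\<in>F - insert x (nbrs E x). \<pi> y * (kpow E \<mu> \<pi> n y z * mkernel E \<mu> \<pi> z x) = 0"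
      using mkernel_eq_0 sym by (auto simp: nbrs_def)
  qed (use F Suc.IH in \<open>auto simp: F_def\<close>)
  also have "\<dots> = \<pi> y * kpow E \<mu> \<pi> (Suc n) y x"
    by (simp only: Suc_eq_plus1 chapman_kolmogorov[OF F, of 1 x, unfolded kpow_one] sum_distrib_left)
  finally show ?case .
qed

lemma kpow_diag_eq:
  "kpow E \<mu> \<pi> (n + n) x x = \<pi> x * (\<Sum>w\<in>gball E x (real n). (kpow E \<mu> \<pi> n x w)\<^sup>2 / \<pi> w)"
proof -
  have "kpow E \<mu> \<pi> (n + n) x x = (\<Sum>w\<in>gball E x (real n). kpow E \<mu> \<pi> n x w * kpow E \<mu> \<pi> n w x)"
    by (rule chapman_kolmogorov[OF finite_gball order_refl])
  also have "\<dots> = (\<Sum>w\<in>gball E x (real n). \<pi> x * ((kpow E \<mu> \<pi> n x w)\<^sup>2 / \<pi> w))"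
  proof (rule sum.cong)
    fix w
    show "kpow E \<mu> \<pi> n x w * kpow E \<mu> \<pi> n w x = \<pi> x * ((kpow E \<mu> \<pi> n x w)\<^sup>2 / \<pi> w)"
      using kpow_reversible[of x n w] pi_pos[of w] by (simp add: field_simps power2_eq_square)
  qed simp
  finally show ?thesis
    by (simp add: sum_distrib_left)
qed

lemma gvol_pos: "r \<ge> 0 \<Longrightarrow> gvol E \<pi> x r > 0"
  unfolding gvol_def by (rule sum_pos2[of _ x]) (auto simp: finite_gball pi_pos less_imp_le)

lemma gvol_mono: "r \<le> R \<Longrightarrow> gvol E \<pi> x r \<le> gvol E \<pi> x R"
  unfolding gvol_def by (rule sum_mono2) (auto simp: finite_gball pi_pos less_imp_le)

lemma bdry_vol_nonneg: "bdry_vol E \<pi> K z r \<ge> 0"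
  unfolding bdry_vol_def by (rule sum_nonneg) (simp add: pi_pos less_imp_le)

lemma bdry_vol_mono: "r \<le> R \<Longrightarrow> bdry_vol E \<pi> K z r \<le> bdry_vol E \<pi> K z R"
  unfolding bdry_vol_def by (rule sum_mono2) (auto simp: finite_gball pi_pos less_imp_le)

lemma bdry_vol_div_gvol_mono:
  assumes "r \<le> s" "s \<le> R" "s \<ge> 0"
  shows "bdry_vol E \<pi> K v r / gvol E \<pi> x R \<le> bdry_vol E \<pi> K v s / gvol E \<pi> x s"
  using assms bdry_vol_mono gvol_mono bdry_vol_nonneg gvol_pos by (intro frac_le) auto

lemma sum_bdry_gball_le:
  "(\<Sum>z\<in>outer_bdry E K \<inter> gball E x r. \<pi> z) \<le> bdry_vol E \<pi> K v (real (gdist E v x) + r)"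
  unfolding bdry_vol_def
proof (rule sum_mono2)
  show "outer_bdry E K \<inter> gball E x r \<subseteq> gball E v (real (gdist E v x) + r) \<inter> outer_bdry E K"
  proof
    fix z assume "z \<in> outer_bdry E K \<inter> gball E x r"
    then show "z \<in> gball E v (real (gdist E v x) + r) \<inter> outer_bdry E K"
      using gdist_triangle[of v z x] by simp
  qed
qed (auto simp: finite_gball pi_pos less_imp_le)

lemma markov_iter_indicator:
  "markov_iter E \<mu> \<pi> (indicator A) n x = (\<Sum>w\<in>A \<inter> gball E x (real n). kpow E \<mu> \<pi> n x w)"
proof -
  have "markov_iter E \<mu> \<pi> (indicator A) n x
      = (\<Sum>w\<in>gball E x (real n). kpow E \<mu> \<pi> n x w * indicator A w)"
    by (rule markov_iter_eq_sum[OF finite_gball]) simp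
  also have "\<dots> = (\<Sum>w\<in>gball E x (real n). if w \<in> A then kpow E \<mu> \<pi> n x w else 0)"
    by (rule sum.cong) auto
  also have "\<dots> = (\<Sum>w\<in>gball E x (real n) \<inter> A. kpow E \<mu> \<pi> n x w)"
    by (rule sum.inter_restrict[symmetric, OF finite_gball])
  finally show ?thesis
    by (simp add: Int_commute)
qed

lemma hit_le_le_sum_markov_iter:
  assumes "x \<notin> K \<or> x \<in> outer_bdry E K"
  shows "hit_le E \<mu> \<pi> K n x \<le> (\<Sum>m\<le>n. markov_iter E \<mu> \<pi> (indicator (outer_bdry E K)) m x)"
  using assms
proof (induction n arbitrary: x)
  case 0
  then show ?case by (auto simp: outer_bdry_def)
next
  case (Suc n)
  let ?q = "markov_iter E \<mu> \<pi> (indicator (outer_bdry E K))"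
  have q_nonneg: "?q m x \<ge> 0" for m
    by (rule markov_iter_nonneg) simp
  show ?case
  proof (cases "x \<in> K")
    case True
    then have "hit_le E \<mu> \<pi> K (Suc n) x = ?q 0 x"
      using Suc.prems by simp
    also have "\<dots> \<le> (\<Sum>m\<le>Suc n. ?q m x)"
      using q_nonneg by (intro member_le_sum) auto
    finally show ?thesis .
  next
    case False
    have "hit_le E \<mu> \<pi> K (Suc n) x
        \<le> (\<Sum>z\<in>insert x (nbrs E x). mkernel E \<mu> \<pi> x z * (\<Sum>m\<le>n. ?q m z))"
      using False Suc.IH
      by (auto intro!: sum_mono mult_left_mono mkernel_nonneg simp: outer_bdry_def nbrs_def)
    also have "\<dots> = (\<Sum>m\<le>n. ?q (Suc m) x)"
      by (simp add: sum_distrib_left sum.swap[of _ "insert x (nbrs E x)"])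
    also have "\<dots> \<le> ?q 0 x + (\<Sum>m\<le>n. ?q (Suc m) x)"
      by (rule add_increasing[OF q_nonneg order_refl])
    also have "\<dots> = (\<Sum>m\<le>Suc n. ?q m x)"
      by (rule sum.atMost_Suc_shift[symmetric])
    finally show ?thesis .
  qed
qed

end

section \<open>Gaussian bounds and volume doubling\<close>

locale gaussian_walk = reversible_walk E \<mu> \<pi> for E :: "'v \<Rightarrow> 'v \<Rightarrow> bool" and \<mu> \<pi> +
  fixes c1 c2 c3 c4 :: real
  assumes c_pos: "c1 > 0" "c2 > 0" "c3 > 0" "c4 > 0"
    and heat_kernel_lower: "\<And>x y n. gdist E x y \<le> n \<Longrightarrow>
      c1 / gvol E \<pi> x (sqrt (real n)) * exp (- (real (gdist E x y))\<^sup>2 / (c2 * real n))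
        \<le> heat_kernel E \<mu> \<pi> n x y"
    and heat_kernel_upper: "\<And>x y n. gdist E x y \<le> n \<Longrightarrow>
      heat_kernel E \<mu> \<pi> n x y
        \<le> c3 / gvol E \<pi> x (sqrt (real n)) * exp (- (real (gdist E x y))\<^sup>2 / (c4 * real n))"
begin

lemma kpow_le_gaussian:
  assumes "gdist E x z \<le> n"
  shows "kpow E \<mu> \<pi> n x z
    \<le> c3 / gvol E \<pi> x (sqrt (real n)) * (\<pi> z * exp (- (real (gdist E x z))\<^sup>2 / (c4 * real n)))"
  using mult_left_mono[OF heat_kernel_upper[OF assms], of "\<pi> z"] pi_pos[of z]
  by (simp add: heat_kernel_def mult_ac)

lemma kpow_ge_on_ball:
  assumes "n \<ge> 1" and "w \<in> gball E x (sqrt (real n))"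
  shows "\<pi> w * (c1 * exp (- 1 / c2) / gvol E \<pi> x (sqrt (real n))) \<le> kpow E \<mu> \<pi> n x w"
proof -
  have "real (gdist E x w) \<le> sqrt (real n)"
    using assms(2) by simp
  then have dist_sq: "(real (gdist E x w))\<^sup>2 \<le> real n"
    using power_mono[of _ _ 2] by fastforce
  then have "gdist E x w \<le> n"
    by (metis of_nat_le_iff of_nat_power power2_nat_le_imp_le)
  have "(real (gdist E x w))\<^sup>2 / (c2 * real n) \<le> 1 / c2"
    using dist_sq assms(1) c_pos by (simp add: divide_le_eq field_simps)
  then have "c1 * exp (- 1 / c2) / gvol E \<pi> x (sqrt (real n))
      \<le> c1 / gvol E \<pi> x (sqrt (real n)) * exp (- (real (gdist E x w))\<^sup>2 / (c2 * real n))"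
    using c_pos gvol_pos[of "sqrt (real n)" x] by (simp add: divide_right_mono mult_left_mono)
  also have "\<dots> \<le> kpow E \<mu> \<pi> n x w / \<pi> w"
    using heat_kernel_lower[OF \<open>gdist E x w \<le> n\<close>] by (simp add: heat_kernel_def)
  finally show ?thesis
    using pi_pos[of w] by (simp add: field_simps)
qed

lemma kpow_diag_ge:
  assumes "n \<ge> 1"
  shows "\<pi> x * (c1 * exp (- 1 / c2))\<^sup>2 / gvol E \<pi> x (sqrt (real n)) \<le> kpow E \<mu> \<pi> (n + n) x x"
proof -
  let ?a = "c1 * exp (- 1 / c2)"
  let ?V = "gvol E \<pi> x (sqrt (real n))"
  let ?b = "gball E x (sqrt (real n))"
  have "sqrt (real n) \<le> real n"
    using assms by (intro real_le_lsqrt) (auto simp: power2_eq_square)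
  then have "?b \<subseteq> gball E x (real n)"
    by (rule gball_mono)
  have V_pos: "?V > 0"
    by (rule gvol_pos) simp
  have "(\<Sum>w\<in>?b. (\<pi> w * (?a / ?V))\<^sup>2 / \<pi> w) = (\<Sum>w\<in>?b. \<pi> w) * (?a / ?V)\<^sup>2"
    unfolding sum_distrib_right using pi_pos
    by (intro sum.cong refl) (simp add: power2_eq_square field_simps)
  also have "\<dots> = ?a\<^sup>2 / ?V"
    using V_pos by (simp add: gvol_def power2_eq_square)
  finally have "\<pi> x * ?a\<^sup>2 / ?V = \<pi> x * (\<Sum>w\<in>?b. (\<pi> w * (?a / ?V))\<^sup>2 / \<pi> w)"
    by simp
  also have "\<dots> \<le> \<pi> x * (\<Sum>w\<in>?b. (kpow E \<mu> \<pi> n x w)\<^sup>2 / \<pi> w)"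
  proof (intro mult_left_mono sum_mono divide_right_mono)
    fix w assume "w \<in> ?b"
    then show "(\<pi> w * (?a / ?V))\<^sup>2 \<le> (kpow E \<mu> \<pi> n x w)\<^sup>2"
      using kpow_ge_on_ball[OF assms] c_pos pi_pos[of w] V_pos
      by (intro power_mono) auto
  qed (use pi_pos in \<open>auto intro: less_imp_le\<close>)
  also have "\<dots> \<le> \<pi> x * (\<Sum>w\<in>gball E x (real n). (kpow E \<mu> \<pi> n x w)\<^sup>2 / \<pi> w)"
    using \<open>?b \<subseteq> gball E x (real n)\<close> pi_pos
    by (intro mult_left_mono sum_mono2 finite_gball) (simp_all add: less_imp_le)
  also have "\<dots> = kpow E \<mu> \<pi> (n + n) x x"
    by (rule kpow_diag_eq[symmetric])
  finally show ?thesis .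
qed

definition vol_doubling_const :: real where
  "vol_doubling_const = c3 / (c1 * exp (- 1 / c2))\<^sup>2"

lemma vol_doubling_const_pos: "vol_doubling_const > 0"
  using c_pos by (simp add: vol_doubling_const_def)

lemma gvol_doubling:
  assumes "n \<ge> 1"
  shows "gvol E \<pi> x (sqrt (real (2 * n))) \<le> vol_doubling_const * gvol E \<pi> x (sqrt (real n))"
proof -
  let ?a = "c1 * exp (- 1 / c2)"
  have "\<pi> x * (?a\<^sup>2 / gvol E \<pi> x (sqrt (real n))) \<le> kpow E \<mu> \<pi> (n + n) x x"
    using kpow_diag_ge[OF assms] by (simp only: times_divide_eq_right)
  also have "\<dots> \<le> \<pi> x * (c3 / gvol E \<pi> x (sqrt (real (2 * n))))"
    using kpow_le_gaussian[of x x "n + n"] by (simp add: mult_2 mult.commute)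
  finally have "?a\<^sup>2 / gvol E \<pi> x (sqrt (real n)) \<le> c3 / gvol E \<pi> x (sqrt (real (2 * n)))"
    using pi_pos[of x] by (simp only: mult_le_cancel_left_pos)
  then show ?thesis
    using c_pos gvol_pos[of "sqrt (real n)" x] gvol_pos[of "sqrt (real (2 * n))" x]
    by (simp add: vol_doubling_const_def field_simps)
qed

lemma gvol_doubling_power:
  assumes "m \<ge> 1"
  shows "gvol E \<pi> x (sqrt (real (2 ^ j * m))) \<le> vol_doubling_const ^ j * gvol E \<pi> x (sqrt (real m))"
proof (induction j)
  case 0
  then show ?case by simp
next
  case (Suc j)
  have "gvol E \<pi> x (sqrt (real (2 ^ Suc j * m)))
      \<le> vol_doubling_const * gvol E \<pi> x (sqrt (real (2 ^ j * m)))"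
    using gvol_doubling[of "2 ^ j * m" x] assms by (simp add: mult.assoc)
  also have "\<dots> \<le> vol_doubling_const ^ Suc j * gvol E \<pi> x (sqrt (real m))"
    using mult_left_mono[OF Suc.IH less_imp_le[OF vol_doubling_const_pos]] by simp
  finally show ?case .
qed

lemma gvol_le_polynomial:
  assumes N: "vol_doubling_const \<le> 2 ^ N" and m: "m \<ge> 1" "real m < r\<^sup>2" and "r \<ge> 0"
  shows "gvol E \<pi> x r \<le> (2 * r\<^sup>2 / real m) ^ N * gvol E \<pi> x (sqrt (real m))"
proof -
  define j where "j = (LEAST j. r\<^sup>2 \<le> 2 ^ j * real m)"
  obtain j0 where "r\<^sup>2 < 2 ^ j0"
    using real_arch_pow[of 2 "r\<^sup>2"] by auto
  moreover have "(2::real) ^ j0 * 1 \<le> 2 ^ j0 * real m"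
    using m(1) by (intro mult_left_mono) auto
  ultimately have "r\<^sup>2 \<le> 2 ^ j0 * real m"
    by linarith
  then have j_ge: "r\<^sup>2 \<le> 2 ^ j * real m"
    unfolding j_def by (rule LeastI)
  have "j \<noteq> 0"
    using j_ge m by (intro notI) simp
  then have "\<not> r\<^sup>2 \<le> 2 ^ (j - 1) * real m"
    unfolding j_def by (intro not_less_Least) (simp add: j_def)
  moreover have "(2::real) ^ j = 2 * 2 ^ (j - 1)"
    using \<open>j \<noteq> 0\<close> by (simp flip: power_Suc)
  ultimately have j_lt: "2 ^ j \<le> 2 * r\<^sup>2 / real m"
    using m(1) by (simp add: le_divide_eq)
  have "r \<le> sqrt (real (2 ^ j * m))"
    using j_ge \<open>r \<ge> 0\<close> by (simp add: real_le_rsqrt)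
  then have "gvol E \<pi> x r \<le> gvol E \<pi> x (sqrt (real (2 ^ j * m)))"
    by (rule gvol_mono)
  also have "\<dots> \<le> vol_doubling_const ^ j * gvol E \<pi> x (sqrt (real m))"
    using m(1) by (rule gvol_doubling_power)
  also have "\<dots> \<le> (2 ^ N) ^ j * gvol E \<pi> x (sqrt (real m))"
    using N vol_doubling_const_pos gvol_pos[of "sqrt (real m)" x]
    by (intro mult_right_mono power_mono) auto
  also have "(2 ^ N) ^ j = ((2::real) ^ j) ^ N"
    by (simp flip: power_mult add: mult.commute)
  also have "((2::real) ^ j) ^ N * gvol E \<pi> x (sqrt (real m))
      \<le> (2 * r\<^sup>2 / real m) ^ N * gvol E \<pi> x (sqrt (real m))"
    using j_lt gvol_pos[of "sqrt (real m)" x] by (intro mult_right_mono power_mono) auto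
  finally show ?thesis .
qed

lemma markov_iter_indicator_le_gaussian:
  "markov_iter E \<mu> \<pi> (indicator A) m x
    \<le> c3 / gvol E \<pi> x (sqrt (real m))
      * (\<Sum>z\<in>A \<inter> gball E x (real m). \<pi> z * exp (- (real (gdist E x z))\<^sup>2 / (c4 * real m)))"
  unfolding markov_iter_indicator sum_distrib_left
  by (intro sum_mono kpow_le_gaussian) simp

end

section \<open>Gaussian sums over a doubling boundary\<close>

locale bdry_doubling = reversible_walk E \<mu> \<pi> for E :: "'v \<Rightarrow> 'v \<Rightarrow> bool" and \<mu> \<pi> +
  fixes K :: "'v set" and D :: real
  assumes D_pos: "D > 0"
    and bdry_vol_doubling: "\<And>z r. z \<in> outer_bdry E K \<Longrightarrow> r > 0 \<Longrightarrow>
      bdry_vol E \<pi> K z (2 * r) \<le> D * bdry_vol E \<pi> K z r"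
begin

lemma bdry_vol_doubling_power:
  assumes "z \<in> outer_bdry E K" and "\<rho> > 0"
  shows "bdry_vol E \<pi> K z (2 ^ i * \<rho>) \<le> D ^ i * bdry_vol E \<pi> K z \<rho>"
proof (induction i)
  case 0
  then show ?case by simp
next
  case (Suc i)
  have "bdry_vol E \<pi> K z (2 ^ Suc i * \<rho>) \<le> D * bdry_vol E \<pi> K z (2 ^ i * \<rho>)"
    using bdry_vol_doubling[OF assms(1), of "2 ^ i * \<rho>"] assms(2) by (simp add: mult.assoc)
  also have "\<dots> \<le> D ^ Suc i * bdry_vol E \<pi> K z \<rho>"
    using mult_left_mono[OF Suc.IH, of D] D_pos by simp
  finally show ?case .
qed

definition dyadic_const :: "real \<Rightarrow> nat \<Rightarrow> real" where
  "dyadic_const c N = 2 * exp (1 / (4 * c)) * D * (8 * c * real N) ^ N"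

lemma dyadic_const_nonneg: "c > 0 \<Longrightarrow> dyadic_const c N \<ge> 0"
  using D_pos by (simp add: dyadic_const_def)

context
  fixes x v :: 'v
  assumes x_notin: "x \<notin> K"
    and v_bdry: "v \<in> outer_bdry E K"
    and v_nearest: "\<And>z. z \<in> outer_bdry E K \<Longrightarrow> gdist E x v \<le> gdist E x z"
begin

lemma gdist_nearest_ge_1: "gdist E x v \<ge> 1"
  using x_notin v_bdry gdist_eq_0_iff[of x v] by (auto simp: outer_bdry_def)

lemma gaussian_weight_le_dyadic:
  assumes "c > 0" "m \<ge> 1" "real (gdist E x v) \<le> \<rho>" "\<rho>\<^sup>2 \<le> (real (gdist E x v))\<^sup>2 + real m"
    and "z \<in> outer_bdry E K" "gdist E x z \<le> m"
  shows "\<exists>i\<le>m. real (gdist E x z) \<le> 2 ^ i * \<rho> \<and>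
    exp (- (real (gdist E x z))\<^sup>2 / (c * real m))
      \<le> exp (1 / (4 * c)) * exp (- (4 ^ i * (\<rho>\<^sup>2 / real m) / (4 * c)))"
proof -
  let ?g = "real (gdist E x z)"
  have "\<rho> \<ge> 1"
    using gdist_nearest_ge_1 assms(3) by linarith
  have "gdist E x z \<le> 2 ^ m"
    using assms(6) less_exp[of m] by linarith
  then have "?g \<le> 2 ^ m"
    by simp
  also have "\<dots> \<le> 2 ^ m * \<rho>"
    using \<open>\<rho> \<ge> 1\<close> by simp
  finally have "?g \<le> 2 ^ m * \<rho>" .
  moreover have "(real (gdist E x v))\<^sup>2 \<le> ?g\<^sup>2"
    using v_nearest[OF assms(5)] by (simp add: power_mono)
  then have "\<rho>\<^sup>2 \<le> ?g\<^sup>2 + real m"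
    using assms(4) by linarith
  ultimately obtain i where i: "i \<le> m" "?g \<le> 2 ^ i * \<rho>" "4 ^ i * \<rho>\<^sup>2 \<le> 4 * ?g\<^sup>2 + real m"
    using exists_dyadic_scale[of \<rho> ?g m "real m"] \<open>\<rho> \<ge> 1\<close> by auto
  have "4 ^ i * (\<rho>\<^sup>2 / real m) / (4 * c) = 4 ^ i * \<rho>\<^sup>2 / (4 * c * real m)"
    by simp
  also have "\<dots> \<le> (4 * ?g\<^sup>2 + real m) / (4 * c * real m)"
    using i(3) assms(1,2) by (intro divide_right_mono) auto
  also have "\<dots> = 1 / (4 * c) + ?g\<^sup>2 / (c * real m)"
    using assms(1,2) by (simp add: field_simps)
  finally have "exp (- ?g\<^sup>2 / (c * real m)) \<le> exp (1 / (4 * c) + - (4 ^ i * (\<rho>\<^sup>2 / real m) / (4 * c)))"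
    by simp
  also have "\<dots> = exp (1 / (4 * c)) * exp (- (4 ^ i * (\<rho>\<^sup>2 / real m) / (4 * c)))"
    by (rule exp_add)
  finally show ?thesis
    using i(1,2) by blast
qed

lemma bdry_mass_dyadic_le:
  assumes "real (gdist E x v) \<le> \<rho>" "\<rho> > 0"
  shows "(\<Sum>z\<in>outer_bdry E K \<inter> gball E x (2 ^ i * \<rho>). \<pi> z) \<le> D ^ Suc i * bdry_vol E \<pi> K v \<rho>"
proof -
  have "(\<Sum>z\<in>outer_bdry E K \<inter> gball E x (2 ^ i * \<rho>). \<pi> z)
      \<le> bdry_vol E \<pi> K v (real (gdist E v x) + 2 ^ i * \<rho>)"
    by (rule sum_bdry_gball_le)
  also have "\<dots> \<le> bdry_vol E \<pi> K v (2 ^ Suc i * \<rho>)"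
  proof (rule bdry_vol_mono)
    have "\<rho> \<le> 2 ^ i * \<rho>" "2 ^ Suc i * \<rho> = 2 ^ i * \<rho> + 2 ^ i * \<rho>"
      using assms(2) by simp_all
    then show "real (gdist E v x) + 2 ^ i * \<rho> \<le> 2 ^ Suc i * \<rho>"
      using assms(1) gdist_commute[of v x] by linarith
  qed
  also have "\<dots> \<le> D ^ Suc i * bdry_vol E \<pi> K v \<rho>"
    using v_bdry assms(2) by (rule bdry_vol_doubling_power)
  finally show ?thesis .
qed

text \<open>The boundary points at distance about \<open>2 ^ i * \<rho>\<close> from \<open>x\<close> lie in the ball of radius
  \<open>2 ^ Suc i * \<rho>\<close> around \<open>v\<close>, whose boundary volume is controlled by doubling, and they carry
  Gaussian weight at most \<open>exp (- 4 ^ i * \<rho>\<^sup>2 / (4 * c * m))\<close> up to a constant.\<close>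
lemma bdry_gaussian_sum_le_shells:
  assumes "c > 0" "m \<ge> 1"
    and "real (gdist E x v) \<le> \<rho>" "\<rho>\<^sup>2 \<le> (real (gdist E x v))\<^sup>2 + real m"
  shows "(\<Sum>z\<in>outer_bdry E K \<inter> gball E x (real m). \<pi> z * exp (- (real (gdist E x z))\<^sup>2 / (c * real m)))
    \<le> exp (1 / (4 * c)) * bdry_vol E \<pi> K v \<rho>
      * (\<Sum>i\<le>m. D ^ Suc i * exp (- (4 ^ i * (\<rho>\<^sup>2 / real m) / (4 * c))))"
proof -
  let ?S = "outer_bdry E K \<inter> gball E x (real m)"
  let ?t = "\<rho>\<^sup>2 / real m"
  define w where "w i = exp (1 / (4 * c)) * exp (- (4 ^ i * ?t / (4 * c)))" for i :: nat
  have "\<rho> > 0"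
    using gdist_nearest_ge_1 assms(3) by linarith
  have pointwise: "exp (- (real (gdist E x z))\<^sup>2 / (c * real m))
      \<le> (\<Sum>i\<le>m. if real (gdist E x z) \<le> 2 ^ i * \<rho> then w i else 0)" if "z \<in> ?S" for z
  proof -
    have z: "z \<in> outer_bdry E K" "gdist E x z \<le> m"
      using that by auto
    obtain i where i: "i \<le> m" "real (gdist E x z) \<le> 2 ^ i * \<rho>"
      and le_w: "exp (- (real (gdist E x z))\<^sup>2 / (c * real m)) \<le> w i"
      using gaussian_weight_le_dyadic[OF assms z] unfolding w_def by blast
    note le_w
    also have "w i = (if real (gdist E x z) \<le> 2 ^ i * \<rho> then w i else 0)"
      using i(2) by simp
    also have "\<dots> \<le> (\<Sum>i\<le>m. if real (gdist E x z) \<le> 2 ^ i * \<rho> then w i else 0)"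
      using i(1) by (intro member_le_sum) (auto simp: w_def)
    finally show ?thesis .
  qed
  have "(\<Sum>z\<in>?S. \<pi> z * exp (- (real (gdist E x z))\<^sup>2 / (c * real m)))
      \<le> (\<Sum>z\<in>?S. \<pi> z * (\<Sum>i\<le>m. if real (gdist E x z) \<le> 2 ^ i * \<rho> then w i else 0))"
    using pointwise pi_pos by (intro sum_mono mult_left_mono) (auto intro: less_imp_le)
  also have "\<dots> = (\<Sum>i\<le>m. w i * (\<Sum>z\<in>?S \<inter> gball E x (2 ^ i * \<rho>). \<pi> z))"
    by (simp add: sum_distrib_left sum.swap[of _ ?S] sum.inter_restrict[OF finite_Int[OF disjI2[OF finite_gball]]]
        mult.commute if_distrib cong: if_cong)
  also have "\<dots> \<le> (\<Sum>i\<le>m. w i * (D ^ Suc i * bdry_vol E \<pi> K v \<rho>))"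
  proof (intro sum_mono mult_left_mono)
    fix i
    have "(\<Sum>z\<in>?S \<inter> gball E x (2 ^ i * \<rho>). \<pi> z) \<le> (\<Sum>z\<in>outer_bdry E K \<inter> gball E x (2 ^ i * \<rho>). \<pi> z)"
      using pi_pos by (intro sum_mono2) (auto simp: finite_gball less_imp_le)
    also have "\<dots> \<le> D ^ Suc i * bdry_vol E \<pi> K v \<rho>"
      using assms(3) \<open>\<rho> > 0\<close> by (rule bdry_mass_dyadic_le)
    finally show "(\<Sum>z\<in>?S \<inter> gball E x (2 ^ i * \<rho>). \<pi> z) \<le> D ^ Suc i * bdry_vol E \<pi> K v \<rho>" .
  qed (simp add: w_def)
  also have "\<dots> = exp (1 / (4 * c)) * bdry_vol E \<pi> K v \<rho> * (\<Sum>i\<le>m. D ^ Suc i * exp (- (4 ^ i * ?t / (4 * c))))"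
    by (simp add: w_def sum_distrib_left mult_ac)
  finally show ?thesis .
qed

lemma bdry_gaussian_sum_le:
  assumes "c > 0" "2 * D \<le> 4 ^ N" "m \<ge> 1"
    and "real (gdist E x v) \<le> \<rho>" "real m \<le> \<rho>\<^sup>2" "\<rho>\<^sup>2 \<le> (real (gdist E x v))\<^sup>2 + real m"
  shows "(\<Sum>z\<in>outer_bdry E K \<inter> gball E x (real m). \<pi> z * exp (- (real (gdist E x z))\<^sup>2 / (c * real m)))
    \<le> dyadic_const c N * exp (- (\<rho>\<^sup>2 / real m) / (8 * c)) * bdry_vol E \<pi> K v \<rho>"
proof -
  let ?t = "\<rho>\<^sup>2 / real m"
  have "(\<Sum>z\<in>outer_bdry E K \<inter> gball E x (real m). \<pi> z * exp (- (real (gdist E x z))\<^sup>2 / (c * real m)))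
      \<le> exp (1 / (4 * c)) * bdry_vol E \<pi> K v \<rho> * (\<Sum>i\<le>m. D ^ Suc i * exp (- (4 ^ i * ?t / (4 * c))))"
    using assms(1,3,4,6) by (rule bdry_gaussian_sum_le_shells)
  also have "\<dots> \<le> exp (1 / (4 * c)) * bdry_vol E \<pi> K v \<rho>
      * (2 * D * (2 * (4 * c) * real N) ^ N * exp (- ?t / (2 * (4 * c))))"
    using assms(1,2,3,5) D_pos bdry_vol_nonneg
    by (intro mult_left_mono dyadic_series_le) (auto simp: le_divide_eq)
  also have "\<dots> = dyadic_const c N * exp (- ?t / (8 * c)) * bdry_vol E \<pi> K v \<rho>"
    by (simp add: dyadic_const_def mult_ac)
  finally show ?thesis
    by simp
qed

end

end

section \<open>Visits to the boundary\<close>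

locale harnack_bdry = gaussian_walk E \<mu> \<pi> c1 c2 c3 c4 + bdry_doubling E \<mu> \<pi> K D
  for E :: "'v \<Rightarrow> 'v \<Rightarrow> bool" and \<mu> \<pi> c1 c2 c3 c4 K D
begin

context
  fixes x v :: 'v
  assumes x_notin: "x \<notin> K"
    and v_bdry: "v \<in> outer_bdry E K"
    and v_nearest: "\<And>z. z \<in> outer_bdry E K \<Longrightarrow> gdist E x v \<le> gdist E x z"
begin

lemma occupation_le_late:
  assumes "2 * D \<le> 4 ^ N" and "(gdist E x v)\<^sup>2 \<le> m"
  shows "markov_iter E \<mu> \<pi> (indicator (outer_bdry E K)) m x
    \<le> c3 * dyadic_const c4 N * (bdry_vol E \<pi> K v (sqrt (real m)) / gvol E \<pi> x (sqrt (real m)))"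
proof -
  let ?V = "gvol E \<pi> x (sqrt (real m))"
  have "m \<ge> 1"
    using assms(2) gdist_nearest_ge_1[OF x_notin v_bdry v_nearest] by (meson le_trans one_le_power)
  have "real (gdist E x v) \<le> sqrt (real m)"
    using assms(2) by (intro real_le_rsqrt) (simp flip: of_nat_power)
  then have "markov_iter E \<mu> \<pi> (indicator (outer_bdry E K)) m x
      \<le> c3 / ?V * (dyadic_const c4 N * exp (- ((sqrt (real m))\<^sup>2 / real m) / (8 * c4))
          * bdry_vol E \<pi> K v (sqrt (real m)))"
    using c_pos \<open>m \<ge> 1\<close> gvol_pos[of "sqrt (real m)" x] assms(1)
    by (intro order_trans[OF markov_iter_indicator_le_gaussian] mult_left_mono
        bdry_gaussian_sum_le[OF x_notin v_bdry v_nearest]) auto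
  also have "\<dots> \<le> c3 / ?V * (dyadic_const c4 N * 1 * bdry_vol E \<pi> K v (sqrt (real m)))"
    using c_pos \<open>m \<ge> 1\<close> gvol_pos[of "sqrt (real m)" x] dyadic_const_nonneg bdry_vol_nonneg
    by (intro mult_left_mono mult_right_mono) auto
  finally show ?thesis
    by simp
qed

lemma occupation_le_early:
  assumes "2 * D \<le> 4 ^ N" and "vol_doubling_const \<le> 2 ^ N'" and "1 \<le> m" "m < (gdist E x v)\<^sup>2"
  shows "markov_iter E \<mu> \<pi> (indicator (outer_bdry E K)) m x
    \<le> c3 * dyadic_const c4 N * (64 * c4 * real N') ^ N'
       * (bdry_vol E \<pi> K v (real (gdist E x v)) / gvol E \<pi> x (2 * real (gdist E x v)))"
proof -
  let ?d = "real (gdist E x v)"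
  let ?s = "?d\<^sup>2 / real m"
  let ?G = "dyadic_const c4 N"
  let ?Vb = "bdry_vol E \<pi> K v ?d"
  have m: "real m > 0" "real m < ?d\<^sup>2"
    using assms(3,4) by (simp_all flip: of_nat_power)
  have V_pos: "gvol E \<pi> x (sqrt (real m)) > 0" "gvol E \<pi> x (2 * ?d) > 0"
    by (simp_all add: gvol_pos)
  have occ: "markov_iter E \<mu> \<pi> (indicator (outer_bdry E K)) m x
      \<le> c3 / gvol E \<pi> x (sqrt (real m)) * (?G * exp (- ?s / (8 * c4)) * ?Vb)"
    using c_pos V_pos m assms(1,3)
    by (intro order_trans[OF markov_iter_indicator_le_gaussian] mult_left_mono
        bdry_gaussian_sum_le[OF x_notin v_bdry v_nearest]) auto
  have "(2 * ?d)\<^sup>2 = 4 * ?d\<^sup>2"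
    by (simp add: power_mult_distrib)
  then have "real m < (2 * ?d)\<^sup>2"
    using m(2) zero_le_power2[of ?d] by linarith
  then have "gvol E \<pi> x (2 * ?d) \<le> (2 * (2 * ?d)\<^sup>2 / real m) ^ N' * gvol E \<pi> x (sqrt (real m))"
    using assms(2,3) by (intro gvol_le_polynomial) auto
  also have "2 * (2 * ?d)\<^sup>2 / real m = 8 * ?s"
    by (simp add: power_mult_distrib)
  finally have "c3 * gvol E \<pi> x (2 * ?d) \<le> c3 * ((8 * ?s) ^ N' * gvol E \<pi> x (sqrt (real m)))"
    using c_pos by (intro mult_left_mono) auto
  then have V: "c3 / gvol E \<pi> x (sqrt (real m)) \<le> c3 * (8 * ?s) ^ N' / gvol E \<pi> x (2 * ?d)"
    using V_pos by (simp add: divide_le_eq le_divide_eq mult_ac)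
  have "(8 * ?s) ^ N' * exp (- (8 * ?s) / (64 * c4)) \<le> (64 * c4 * real N') ^ N'"
    using c_pos m by (intro power_mult_exp_neg_le) auto
  then have exp_bound: "(8 * ?s) ^ N' * exp (- ?s / (8 * c4)) \<le> (64 * c4 * real N') ^ N'"
    by (simp add: mult_ac)
  have "c3 / gvol E \<pi> x (sqrt (real m)) * (?G * exp (- ?s / (8 * c4)) * ?Vb)
      \<le> c3 * (8 * ?s) ^ N' / gvol E \<pi> x (2 * ?d) * (?G * exp (- ?s / (8 * c4)) * ?Vb)"
    using V c_pos dyadic_const_nonneg bdry_vol_nonneg by (intro mult_right_mono) auto
  also have "\<dots> = c3 * ?G * (?Vb / gvol E \<pi> x (2 * ?d)) * ((8 * ?s) ^ N' * exp (- ?s / (8 * c4)))"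
    by simp
  also have "\<dots> \<le> c3 * ?G * (?Vb / gvol E \<pi> x (2 * ?d)) * (64 * c4 * real N') ^ N'"
    using exp_bound c_pos V_pos dyadic_const_nonneg bdry_vol_nonneg
    by (intro mult_left_mono) auto
  finally show ?thesis
    using occ by (simp add: mult_ac)
qed

lemma sum_occupation_early_le:
  assumes "2 * D \<le> 4 ^ N" and "vol_doubling_const \<le> 2 ^ N'"
  shows "(\<Sum>m<(gdist E x v)\<^sup>2. markov_iter E \<mu> \<pi> (indicator (outer_bdry E K)) m x)
    \<le> c3 * dyadic_const c4 N * (64 * c4 * real N') ^ N'
       * (\<Sum>i\<in>{(gdist E x v)\<^sup>2..<2 * (gdist E x v)\<^sup>2}.
            bdry_vol E \<pi> K v (sqrt (real i)) / gvol E \<pi> x (sqrt (real i)))"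
proof -
  let ?d = "gdist E x v"
  let ?C = "c3 * dyadic_const c4 N * (64 * c4 * real N') ^ N'"
  let ?R = "bdry_vol E \<pi> K v (real ?d) / gvol E \<pi> x (2 * real ?d)"
  have C_nonneg: "?C \<ge> 0"
    using c_pos dyadic_const_nonneg by simp
  have R_nonneg: "?R \<ge> 0"
    using bdry_vol_nonneg gvol_pos[of "2 * real ?d" x] by simp
  have "(\<Sum>m<?d\<^sup>2. markov_iter E \<mu> \<pi> (indicator (outer_bdry E K)) m x) \<le> (\<Sum>m<?d\<^sup>2. ?C * ?R)"
  proof (rule sum_mono)
    fix m assume "m \<in> {..<?d\<^sup>2}"
    then show "markov_iter E \<mu> \<pi> (indicator (outer_bdry E K)) m x \<le> ?C * ?R"
      using occupation_le_early[OF assms, of m] x_notin mult_nonneg_nonneg[OF C_nonneg R_nonneg]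
      by (cases "m = 0") (auto simp: outer_bdry_def)
  qed
  also have "\<dots> = (\<Sum>i\<in>{?d\<^sup>2..<2 * ?d\<^sup>2}. ?C * ?R)"
    by simp
  also have "\<dots> \<le> (\<Sum>i\<in>{?d\<^sup>2..<2 * ?d\<^sup>2}.
      ?C * (bdry_vol E \<pi> K v (sqrt (real i)) / gvol E \<pi> x (sqrt (real i))))"
  proof (intro sum_mono mult_left_mono C_nonneg bdry_vol_div_gvol_mono)
    fix i assume i: "i \<in> {?d\<^sup>2..<2 * ?d\<^sup>2}"
    then show "real ?d \<le> sqrt (real i)"
      by (intro real_le_rsqrt) (simp flip: of_nat_power)
    have "real i \<le> (2 * real ?d)\<^sup>2"
      using i by (simp add: power_mult_distrib flip: of_nat_power)
    then show "sqrt (real i) \<le> 2 * real ?d"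
      by (intro real_le_lsqrt) auto
  qed simp
  finally show ?thesis
    by (simp add: sum_distrib_left)
qed

lemma sum_occupation_le:
  assumes "2 * D \<le> 4 ^ N" and "vol_doubling_const \<le> 2 ^ N'"
  shows "(\<Sum>m\<le>n. markov_iter E \<mu> \<pi> (indicator (outer_bdry E K)) m x)
    \<le> c3 * dyadic_const c4 N * ((64 * c4 * real N') ^ N' + 1)
       * (\<Sum>i\<in>{(gdist E x v)\<^sup>2..2 * (gdist E x v)\<^sup>2 + n}.
            bdry_vol E \<pi> K v (sqrt (real i)) / gvol E \<pi> x (sqrt (real i)))"
proof -
  let ?d = "gdist E x v"
  let ?q = "\<lambda>m. markov_iter E \<mu> \<pi> (indicator (outer_bdry E K)) m x"
  let ?T = "\<lambda>i. bdry_vol E \<pi> K v (sqrt (real i)) / gvol E \<pi> x (sqrt (real i))"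
  let ?I = "{?d\<^sup>2..2 * ?d\<^sup>2 + n}"
  let ?P = "(64 * c4 * real N') ^ N'"
  have q_nonneg: "?q m \<ge> 0" for m
    by (rule markov_iter_nonneg) simp
  have T_nonneg: "?T i \<ge> 0" for i
    using bdry_vol_nonneg gvol_pos[of "sqrt (real i)" x] by simp
  have C_nonneg: "c3 * dyadic_const c4 N \<ge> 0"
    using c_pos dyadic_const_nonneg by simp
  have "(\<Sum>m\<le>n. ?q m) \<le> (\<Sum>m\<in>{..<?d\<^sup>2} \<union> {?d\<^sup>2..n}. ?q m)"
    using q_nonneg by (intro sum_mono2) auto
  also have "\<dots> = (\<Sum>m<?d\<^sup>2. ?q m) + (\<Sum>m\<in>{?d\<^sup>2..n}. ?q m)"
    by (rule sum.union_disjoint) auto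
  also have "\<dots> \<le> c3 * dyadic_const c4 N * ?P * (\<Sum>i\<in>?I. ?T i)
      + c3 * dyadic_const c4 N * (\<Sum>i\<in>?I. ?T i)"
  proof (rule add_mono)
    have "(\<Sum>m<?d\<^sup>2. ?q m) \<le> c3 * dyadic_const c4 N * ?P * (\<Sum>i\<in>{?d\<^sup>2..<2 * ?d\<^sup>2}. ?T i)"
      by (rule sum_occupation_early_le[OF assms])
    also have "\<dots> \<le> c3 * dyadic_const c4 N * ?P * (\<Sum>i\<in>?I. ?T i)"
      using T_nonneg C_nonneg c_pos by (intro mult_left_mono sum_mono2) auto
    finally show "(\<Sum>m<?d\<^sup>2. ?q m) \<le> c3 * dyadic_const c4 N * ?P * (\<Sum>i\<in>?I. ?T i)" .
    have "(\<Sum>m\<in>{?d\<^sup>2..n}. ?q m) \<le> (\<Sum>m\<in>{?d\<^sup>2..n}. c3 * dyadic_const c4 N * ?T m)"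
      using occupation_le_late[OF assms(1)] by (intro sum_mono) auto
    also have "\<dots> \<le> (\<Sum>m\<in>?I. c3 * dyadic_const c4 N * ?T m)"
      using mult_nonneg_nonneg[OF C_nonneg T_nonneg] by (intro sum_mono2) auto
    finally show "(\<Sum>m\<in>{?d\<^sup>2..n}. ?q m) \<le> c3 * dyadic_const c4 N * (\<Sum>i\<in>?I. ?T i)"
      by (simp add: sum_distrib_left)
  qed
  also have "\<dots> = c3 * dyadic_const c4 N * (?P + 1) * (\<Sum>i\<in>?I. ?T i)"
    by (simp only: distrib_left distrib_right mult_1_right mult_1_left mult.assoc)
  finally show ?thesis .
qed

lemma hit_prob_le_series_nearest:
  assumes "2 * D \<le> 4 ^ N" and "vol_doubling_const \<le> 2 ^ N'"
  defines "C \<equiv> c3 * dyadic_const c4 N * ((64 * c4 * real N') ^ N' + 1)"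
  shows "ennreal (hit_prob E \<mu> \<pi> K x)
    \<le> (\<Sum>n. if (gdist E x v)\<^sup>2 \<le> n
            then ennreal (C / (gvol E \<pi> x (sqrt (real n)) / bdry_vol E \<pi> K v (sqrt (real n))))
            else 0)" (is "_ \<le> suminf ?f")
proof -
  let ?T = "\<lambda>i. bdry_vol E \<pi> K v (sqrt (real i)) / gvol E \<pi> x (sqrt (real i))"
  have "C \<ge> 0"
    using c_pos dyadic_const_nonneg by (simp add: C_def)
  have "ennreal (hit_le E \<mu> \<pi> K n x) \<le> suminf ?f" for n
  proof -
    let ?I = "{(gdist E x v)\<^sup>2..2 * (gdist E x v)\<^sup>2 + n}"
    have "hit_le E \<mu> \<pi> K n x \<le> (\<Sum>m\<le>n. markov_iter E \<mu> \<pi> (indicator (outer_bdry E K)) m x)"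
      using x_notin by (intro hit_le_le_sum_markov_iter) simp
    also have "\<dots> \<le> (\<Sum>i\<in>?I. C * ?T i)"
      using sum_occupation_le[OF assms(1,2)] by (simp add: C_def sum_distrib_left)
    finally have "ennreal (hit_le E \<mu> \<pi> K n x) \<le> ennreal (\<Sum>i\<in>?I. C * ?T i)"
      by (rule ennreal_leI)
    also have "\<dots> = (\<Sum>i\<in>?I. ennreal (C * ?T i))"
      using \<open>C \<ge> 0\<close> bdry_vol_nonneg gvol_pos
      by (intro sum_ennreal[symmetric] mult_nonneg_nonneg divide_nonneg_pos) auto
    also have "\<dots> = (\<Sum>i\<in>?I. ?f i)"
      by (intro sum.cong) (auto simp: divide_divide_eq_right)
    also have "\<dots> \<le> suminf ?f"
      by (rule sum_le_suminf) auto
    finally show ?thesis .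
  qed
  then show ?thesis
    unfolding hit_prob_def by (rule ennreal_SUP_le)
qed

end

lemma hit_prob_le_series:
  assumes "\<And>x. x \<notin> K \<Longrightarrow> w x \<in> outer_bdry E K"
    and "\<And>x z. x \<notin> K \<Longrightarrow> z \<in> outer_bdry E K \<Longrightarrow> gdist E x (w x) \<le> gdist E x z"
  shows "\<exists>C. \<forall>x. x \<notin> K \<longrightarrow> ennreal (hit_prob E \<mu> \<pi> K x)
    \<le> (\<Sum>n. if (gdist E x (w x))\<^sup>2 \<le> n
            then ennreal (C / (gvol E \<pi> x (sqrt (real n)) / bdry_vol E \<pi> K (w x) (sqrt (real n))))
            else 0)"
proof -
  obtain N where "2 * D \<le> 4 ^ N"
    using real_arch_pow[of 4 "2 * D"] by (auto intro: less_imp_le)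
  moreover obtain N' where "vol_doubling_const \<le> 2 ^ N'"
    using real_arch_pow[of 2 vol_doubling_const] by (auto intro: less_imp_le)
  ultimately show ?thesis
    using hit_prob_le_series_nearest assms by blast
qed

end

lemma dist_to_set_le: "z \<in> K \<Longrightarrow> dist_to_set E x K \<le> gdist E x z"
  unfolding dist_to_set_def by (intro cInf_lower) auto

lemma mu_nonneg_if_controlled:
  fixes \<mu> :: "'v \<Rightarrow> 'v \<Rightarrow> real" and \<pi> :: "'v \<Rightarrow> real"
  assumes "\<exists>Cc>1. \<forall>x y. E x y \<longrightarrow> \<mu> x y / \<pi> x \<ge> 1 / Cc"
    and "\<And>x y. \<mu> x y \<noteq> 0 \<longleftrightarrow> E x y" and "\<And>x. \<pi> x > 0"
  shows "\<mu> x y \<ge> 0"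
proof (cases "E x y")
  case True
  obtain Cc where "Cc > 1" "\<mu> x y / \<pi> x \<ge> 1 / Cc"
    using assms(1) True by blast
  moreover have "1 / Cc > 0"
    using \<open>Cc > 1\<close> by simp
  ultimately have "\<mu> x y / \<pi> x \<ge> 0"
    by linarith
  then show ?thesis
    using assms(3)[of x] by (simp add: zero_le_divide_iff)
next
  case False
  then show ?thesis
    using assms(2) by force
qed

theorem corollary2p11:
  fixes E :: "'v \<Rightarrow> 'v \<Rightarrow> bool" and \<mu> :: "'v \<Rightarrow> 'v \<Rightarrow> real" and \<pi> :: "'v \<Rightarrow> real"
    and K :: "'v set" and vx :: "'v \<Rightarrow> 'v"
  assumes infinite_graph: "infinite (UNIV :: 'v set)"
    and sym: "\<And>x y. E x y \<longleftrightarrow> E y x"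
    and irrefl: "\<And>x. \<not> E x x"
    and connected: "\<And>x y. \<exists>n. (E ^^ n) x y"
    and loc_finite: "\<And>x. finite (nbrs E x)"
    and mu_sym: "\<And>x y. \<mu> x y = \<mu> y x"
    and mu_edge: "\<And>x y. \<mu> x y \<noteq> 0 \<longleftrightarrow> E x y"
    and pi_pos: "\<And>x. \<pi> x > 0"
    and pi_ge: "\<And>x. (\<Sum>y\<in>nbrs E x. \<mu> x y) \<le> \<pi> x"
    and controlled: "\<exists>Cc>1. \<forall>x y. E x y \<longrightarrow> \<mu> x y / \<pi> x \<ge> 1 / Cc"
    and lazy: "\<exists>Ce. 0 < Ce \<and> Ce < 1 \<and> (\<forall>x. mkernel E \<mu> \<pi> x x \<ge> Ce)"
    and harnack: "harnack_graph E \<mu> \<pi>"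
    and doubling: "\<exists>D>0. \<forall>z\<in>outer_bdry E K. \<forall>r>0.
                     bdry_vol E \<pi> K z (2 * r) \<le> D * bdry_vol E \<pi> K z r"
    and vx_bdry: "\<And>x. x \<notin> K \<Longrightarrow> vx x \<in> outer_bdry E K"
    and vx_min: "\<And>x. x \<notin> K \<Longrightarrow> gdist E x (vx x) = dist_to_set E x K"
  shows "\<exists>C. \<forall>x. x \<notin> K \<and> x \<notin> inner_bdry E K \<longrightarrow>
           ennreal (hit_prob E \<mu> \<pi> K x)
             \<le> (\<Sum>n. if (dist_to_set E x K)\<^sup>2 \<le> n
                      then ennreal (C / (gvol E \<pi> x (sqrt (real n))
                                         / bdry_vol E \<pi> K (vx x) (sqrt (real n))))
                      else 0)"
proof -
  obtain c1 c2 c3 c4 where "gaussian_walk_axioms E \<mu> \<pi> c1 c2 c3 c4"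
    using harnack unfolding harnack_graph_def gaussian_walk_axioms_def by blast
  moreover obtain D where "bdry_doubling_axioms E \<pi> K D"
    using doubling unfolding bdry_doubling_axioms_def by blast
  ultimately interpret harnack_bdry E \<mu> \<pi> c1 c2 c3 c4 K D
    using sym connected loc_finite mu_sym mu_edge pi_pos pi_ge
      mu_nonneg_if_controlled[OF controlled mu_edge pi_pos]
    by unfold_locales (simp_all add: locally_finite_graph_def reversible_walk_axioms_def
        gaussian_walk_axioms_def bdry_doubling_axioms_def)
  have "\<exists>C. \<forall>x. x \<notin> K \<longrightarrow> ennreal (hit_prob E \<mu> \<pi> K x)
    \<le> (\<Sum>n. if (gdist E x (vx x))\<^sup>2 \<le> n
            then ennreal (C / (gvol E \<pi> x (sqrt (real n)) / bdry_vol E \<pi> K (vx x) (sqrt (real n))))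
            else 0)"
    using vx_bdry vx_min dist_to_set_le by (intro hit_prob_le_series) (auto simp: outer_bdry_def)
  then show ?thesis
    using vx_min by auto
qed

end
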